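(* Let $G$ be a non-Mengerian graph and let $xy$ be a multiedge of $G$. Then the graph obtained from $G$ by m-subdividing $xy$ is also non-Mengerian.
   Context: Graphs are finite, loopless, and may have parallel edges. The multiplicity of a pair $x,y$ is the number of edges with endpoints $x,y$; a pair with multiplicity at least 1 is a multiedge. m-subdividing a multiedge $xy$ of multiplicity $k$ means: delete the $k$ edges between $x$ and $y$, add a new vertex $z$, add $k$ parallel edges between $x$ and $z$ and $k$ parallel edges between $z$ and $y$. A temporal graph is a pair $(G,\lambda)$ with $\lambda:E(G)\to\mathbb{Z}_{>0}$. A temporal $s,t$-path is an $s,t$-path $(s=v_1,e_1,\dots,e_{k-1},v_k=t)$ of $G$ (no repeated vertices) with $\lambda(e_1)\le\dots\le\lambda(e_{k-1})$. Two temporal $s,t$-paths are disjoint if they share no vertex other than $s,t$. For distinct non-adjacent $s,t$, a temporal $s,t$-vertex cut is a set $S\subseteq V(G)\setminus\{s,t\}$ such that $G-S$ (with $\lambda$ restricted) has no temporal $s,t$-path. $p_{G,\lambda}(s,t)$ is the maximum number of pairwise disjoint temporal $s,t$-paths and $c_{G,\lambda}(s,t)$ the minimum size of a temporal $s,t$-vertex cut. $G$ is Mengerian if $p_{G,\lambda}(s,t)=c_{G,\lambda}(s,t)$ for every $\lambda$ and every pair of distinct non-adjacent $s,t\in V(G)$. *)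

theory Defs
  imports Main
begin

text \<open>A finite loopless multigraph: vertex set V, edge set E (edges have identity, so
parallel edges are allowed), and an endpoint map assigning each edge a 2-element
set of vertices.\<close>

definition multigraph :: "'a set \<Rightarrow> 'e set \<Rightarrow> ('e \<Rightarrow> 'a set) \<Rightarrow> bool" where
  "multigraph V E ends \<longleftrightarrow> finite V \<and> finite E \<and>
     (\<forall>e\<in>E. ends e \<subseteq> V \<and> card (ends e) = 2)"

definition adjacent :: "'e set \<Rightarrow> ('e \<Rightarrow> 'a set) \<Rightarrow> 'a \<Rightarrow> 'a \<Rightarrow> bool" where
  "adjacent E ends u v \<longleftrightarrow> (\<exists>e\<in>E. ends e = {u, v})"

definition edges_between :: "'e set \<Rightarrow> ('e \<Rightarrow> 'a set) \<Rightarrow> 'a \<Rightarrow> 'a \<Rightarrow> 'e set" where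
  "edges_between E ends x y = {e\<in>E. ends e = {x, y}}"

definition temporal_path ::
  "'a set \<Rightarrow> 'e set \<Rightarrow> ('e \<Rightarrow> 'a set) \<Rightarrow> ('e \<Rightarrow> nat) \<Rightarrow> 'a set \<Rightarrow> 'a \<Rightarrow> 'a \<Rightarrow>
   'a list \<times> 'e list \<Rightarrow> bool" where
  "temporal_path V E ends lam S s t P \<longleftrightarrow>
     (let vs = fst P; es = snd P in
       vs \<noteq> [] \<and> hd vs = s \<and> last vs = t \<and> distinct vs \<and>
       set vs \<subseteq> V - S \<and>
       length es + 1 = length vs \<and>
       (\<forall>i < length es. es ! i \<in> E \<and> ends (es ! i) = {vs ! i, vs ! Suc i}) \<and>
       sorted (map lam es))"

definition paths_disjoint :: "'a \<Rightarrow> 'a \<Rightarrow> 'a list \<times> 'e list \<Rightarrow> 'a list \<times> 'e list \<Rightarrow> bool" where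
  "paths_disjoint s t P Q \<longleftrightarrow> set (fst P) \<inter> set (fst Q) \<subseteq> {s, t}"

definition max_disjoint_paths ::
  "'a set \<Rightarrow> 'e set \<Rightarrow> ('e \<Rightarrow> 'a set) \<Rightarrow> ('e \<Rightarrow> nat) \<Rightarrow> 'a \<Rightarrow> 'a \<Rightarrow> nat" where
  "max_disjoint_paths V E ends lam s t =
     (GREATEST k. \<exists>P :: nat \<Rightarrow> 'a list \<times> 'e list.
        (\<forall>i<k. temporal_path V E ends lam {} s t (P i)) \<and>
        (\<forall>i<k. \<forall>j<k. i \<noteq> j \<longrightarrow> paths_disjoint s t (P i) (P j)))"

definition temporal_vertex_cut ::
  "'a set \<Rightarrow> 'e set \<Rightarrow> ('e \<Rightarrow> 'a set) \<Rightarrow> ('e \<Rightarrow> nat) \<Rightarrow> 'a \<Rightarrow> 'a \<Rightarrow> 'a set \<Rightarrow> bool" where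
  "temporal_vertex_cut V E ends lam s t S \<longleftrightarrow>
     S \<subseteq> V - {s, t} \<and> \<not> (\<exists>P. temporal_path V E ends lam S s t P)"

definition min_vertex_cut ::
  "'a set \<Rightarrow> 'e set \<Rightarrow> ('e \<Rightarrow> 'a set) \<Rightarrow> ('e \<Rightarrow> nat) \<Rightarrow> 'a \<Rightarrow> 'a \<Rightarrow> nat" where
  "min_vertex_cut V E ends lam s t =
     (LEAST k. \<exists>S. temporal_vertex_cut V E ends lam s t S \<and> card S = k)"

definition mengerian :: "'a set \<Rightarrow> 'e set \<Rightarrow> ('e \<Rightarrow> 'a set) \<Rightarrow> bool" where
  "mengerian V E ends \<longleftrightarrow>
     (\<forall>lam :: 'e \<Rightarrow> nat. (\<forall>e\<in>E. lam e > 0) \<longrightarrow>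
       (\<forall>s\<in>V. \<forall>t\<in>V. s \<noteq> t \<longrightarrow> \<not> adjacent E ends s t \<longrightarrow>
          max_disjoint_paths V E ends lam s t = min_vertex_cut V E ends lam s t))"

definition m_subdivision ::
  "'a set \<Rightarrow> 'e set \<Rightarrow> ('e \<Rightarrow> 'a set) \<Rightarrow> 'a \<Rightarrow> 'a \<Rightarrow> 'a \<Rightarrow>
   'a set \<Rightarrow> 'e set \<Rightarrow> ('e \<Rightarrow> 'a set) \<Rightarrow> bool" where
  "m_subdivision V E ends x y z V' E' ends' \<longleftrightarrow>
     (let Exy = edges_between E ends x y in
      z \<notin> V \<and> V' = insert z V \<and>
      (\<exists>E1 E2. finite E1 \<and> finite E2 \<and> card E1 = card Exy \<and> card E2 = card Exy \<and>
         E1 \<inter> E2 = {} \<and> E1 \<inter> E = {} \<and> E2 \<inter> E = {} \<and>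
         E' = (E - Exy) \<union> E1 \<union> E2 \<and>
         (\<forall>e\<in>E - Exy. ends' e = ends e) \<and>
         (\<forall>e\<in>E1. ends' e = {x, z}) \<and>
         (\<forall>e\<in>E2. ends' e = {z, y})))"

end

theory Submission
  imports Defs
begin

text \<open>Fix a labelling and a non-adjacent pair s, t of G with p < c (weak duality p \<le> c
  always holds). Give the two edge sets replacing the multiedge xy the labels of the k
  original xy-edges. A temporal path of the subdivision through z enters and leaves z via
  x and y with labels l \<le> l', so z can be bypassed by the xy-edge labelled l; hence p' \<le> p.
  Conversely, a temporal path of G uses at most one xy-edge, and replacing it by a pair of
  parallel new edges with the same label gives a path of the subdivision; so a cut of the
  subdivision avoiding z is a cut of G, and z in a cut can be traded for an endpoint of xy
  other than s, t, giving c \<le> c'. Thus p' \<le> p < c \<le> c'.\<close>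

lemma sorted_take_drop_Suc:
  assumes "sorted xs"
  shows "sorted (take k xs @ drop (Suc k) xs)"
proof (cases "k < length xs")
  case True
  then have "sorted (take k xs @ xs ! k # drop (Suc k) xs)"
    using assms by (simp add: id_take_nth_drop[symmetric])
  then show ?thesis by (simp add: sorted_append)
qed (use assms in simp)

lemma distinct_take_drop_Suc:
  assumes "distinct xs" "k < length xs"
  shows "distinct (take k xs @ drop (Suc k) xs)" "set (take k xs @ drop (Suc k) xs) = set xs - {xs ! k}"
proof -
  have "distinct (take k xs @ xs ! k # drop (Suc k) xs)"
    using assms by (simp add: id_take_nth_drop[symmetric])
  moreover have "set xs = set (take k xs @ xs ! k # drop (Suc k) xs)"
    using assms by (simp add: id_take_nth_drop[symmetric])
  ultimately show "distinct (take k xs @ drop (Suc k) xs)" "set (take k xs @ drop (Suc k) xs) = set xs - {xs ! k}"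
    by auto
qed

lemma distinct_take_Cons_drop:
  assumes "distinct xs" "z \<notin> set xs"
  shows "distinct (take n xs @ z # drop n xs)" "set (take n xs @ z # drop n xs) = insert z (set xs)"
proof -
  show "distinct (take n xs @ z # drop n xs)"
    using assms set_take_disj_set_drop_if_distinct[OF assms(1), of n n]
    by (auto dest: in_set_takeD in_set_dropD)
  show "set (take n xs @ z # drop n xs) = insert z (set xs)"
    using set_append[of "take n xs" "drop n xs"] by auto
qed

lemma sorted_duplicate_nth:
  assumes "sorted xs" "j < length xs"
  shows "sorted (take j xs @ xs ! j # xs ! j # drop (Suc j) xs)"
proof -
  have "sorted (take j xs @ xs ! j # drop (Suc j) xs)"
    using assms by (simp add: id_take_nth_drop[symmetric])
  then show ?thesis by (simp add: sorted_append)
qed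

lemma nth_take_drop_Suc:
  assumes "k < length xs" "i < length xs - 1"
  shows "(take k xs @ drop (Suc k) xs) ! i = (if i < k then xs ! i else xs ! Suc i)"
  using assms by (auto simp: nth_append min_def)

lemma nth_take_Cons_drop:
  assumes "n \<le> length xs" "i \<le> length xs"
  shows "(take n xs @ z # drop n xs) ! i = (if i < n then xs ! i else if i = n then z else xs ! (i - 1))"
  using assms by (auto simp: nth_append nth_Cons' Suc_diff_Suc)

lemma walk_bypass_vertex:
  assumes len: "length es + 1 = length vs" and k: "0 < k" "k < length es"
    and other: "\<And>i. i < length es \<Longrightarrow> i \<noteq> k - 1 \<Longrightarrow> i \<noteq> k \<Longrightarrow>
      f (es ! i) \<in> E \<and> ends (f (es ! i)) = {vs ! i, vs ! Suc i}"
    and bypass: "f (es ! (k - 1)) \<in> E \<and> ends (f (es ! (k - 1))) = {vs ! (k - 1), vs ! Suc k}"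
    and i: "i < length es - 1"
  shows "f ((take k es @ drop (Suc k) es) ! i) \<in> E \<and>
    ends (f ((take k es @ drop (Suc k) es) ! i)) =
      {(take k vs @ drop (Suc k) vs) ! i, (take k vs @ drop (Suc k) vs) ! Suc i}"
proof -
  have "k < length vs" "i < length vs - 1" "Suc i < length vs - 1" using len k i by auto
  note vs_nth = nth_take_drop_Suc[OF this(1,2)] nth_take_drop_Suc[OF this(1,3)]
  have es_nth: "(take k es @ drop (Suc k) es) ! i = (if i < k then es ! i else es ! Suc i)"
    using nth_take_drop_Suc[of k es i] k(2) i by simp
  consider "i < k - 1" | "i = k - 1" | "k \<le> i" by linarith
  then show ?thesis
  proof cases
    case 1 then show ?thesis using other[of i] vs_nth es_nth i by auto
  next
    case 2 then show ?thesis using bypass vs_nth es_nth k by auto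
  next
    case 3 then show ?thesis using other[of "Suc i"] vs_nth es_nth i by auto
  qed
qed

lemma walk_split_edge:
  assumes len: "length es + 1 = length vs" and j: "j < length es"
    and other: "\<And>i. i < length es \<Longrightarrow> i \<noteq> j \<Longrightarrow> es ! i \<in> E \<and> ends (es ! i) = {vs ! i, vs ! Suc i}"
    and h: "h1 \<in> E" "h2 \<in> E" "ends h1 = {vs ! j, z}" "ends h2 = {z, vs ! Suc j}"
    and i: "i < length es + 1"
  shows "(take j es @ h1 # h2 # drop (Suc j) es) ! i \<in> E \<and>
    ends ((take j es @ h1 # h2 # drop (Suc j) es) ! i) =
      {(take (Suc j) vs @ z # drop (Suc j) vs) ! i, (take (Suc j) vs @ z # drop (Suc j) vs) ! Suc i}"
proof -
  have "Suc j \<le> length vs" "i \<le> length vs" "Suc i \<le> length vs" using len j i by auto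
  note vs_nth = nth_take_Cons_drop[OF this(1,2), of z] nth_take_Cons_drop[OF this(1,3), of z]
  have es_nth: "(take j es @ h1 # h2 # drop (Suc j) es) ! i =
      (if i < j then es ! i else if i = j then h1 else if i = Suc j then h2 else es ! (i - 1))"
    using i j by (auto simp: nth_append nth_Cons' numeral_2_eq_2 Suc_diff_Suc)
  consider "i < j" | "i = j" | "i = Suc j" | "Suc j < i" by linarith
  then show ?thesis
  proof cases
    case 4 then show ?thesis using other[of "i - 1"] vs_nth es_nth i by auto
  qed (use other[of i] vs_nth es_nth h j in auto)
qed

lemma distinct_consecutive_pairs_eq:
  assumes "distinct vs" "Suc i < length vs" "Suc j < length vs"
    "{vs ! i, vs ! Suc i} = {vs ! j, vs ! Suc j}"
  shows "i = j"
proof (rule ccontr)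
  assume "i \<noteq> j"
  then have "vs ! i = vs ! Suc j" "vs ! Suc i = vs ! j"
    using assms nth_eq_iff_index_eq by (fastforce simp: doubleton_eq_iff)+
  then show False using assms(1-3) nth_eq_iff_index_eq by fastforce
qed

lemma temporal_path_Pair:
  "temporal_path V E ends lam S s t (vs, es) \<longleftrightarrow>
     vs \<noteq> [] \<and> hd vs = s \<and> last vs = t \<and> distinct vs \<and> set vs \<subseteq> V - S \<and>
     length es + 1 = length vs \<and>
     (\<forall>i < length es. es ! i \<in> E \<and> ends (es ! i) = {vs ! i, vs ! Suc i}) \<and>
     sorted (map lam es)"
  by (simp add: temporal_path_def)

lemma temporal_path_internal_vertex:
  assumes "temporal_path V E ends lam S s t P" "s \<noteq> t" "\<not> adjacent E ends s t"
  obtains v where "v \<in> set (fst P)" "v \<noteq> s" "v \<noteq> t"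
proof -
  obtain vs es where P: "P = (vs, es)" by (cases P)
  have A: "vs \<noteq> []" "hd vs = s" "last vs = t" "distinct vs" "length es + 1 = length vs"
    "\<forall>i < length es. es ! i \<in> E \<and> ends (es ! i) = {vs ! i, vs ! Suc i}"
    using assms(1) by (auto simp: P temporal_path_Pair)
  have first: "vs ! 0 = s" and final: "vs ! (length vs - 1) = t"
    using A by (simp_all add: hd_conv_nth last_conv_nth)
  have "length vs \<noteq> 1" using first final assms(2) by auto
  moreover have "length vs \<noteq> 2"
  proof
    assume "length vs = 2"
    then have "length es = 1" "vs ! 1 = t" using A(5) final by simp_all
    then have "es ! 0 \<in> E \<and> ends (es ! 0) = {s, t}" using A(6) first by auto
    then show False using assms(3) by (auto simp: adjacent_def)
  qed
  moreover have "length vs \<noteq> 0" using A(1) by simp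
  ultimately have "1 < length vs" "1 \<noteq> length vs - 1" by presburger+
  then have "vs ! 1 \<noteq> vs ! 0" "vs ! 1 \<noteq> vs ! (length vs - 1)" "vs ! 1 \<in> set vs"
    using A(4) nth_eq_iff_index_eq by fastforce+
  then show thesis using that P first final by simp
qed

lemma disjoint_paths_le_card:
  fixes P :: "nat \<Rightarrow> 'a list \<times> 'e list"
  assumes "finite T" "\<And>i. i < k \<Longrightarrow> \<exists>v\<in>set (fst (P i)) \<inter> T. v \<noteq> s \<and> v \<noteq> t"
    "\<forall>i<k. \<forall>j<k. i \<noteq> j \<longrightarrow> paths_disjoint s t (P i) (P j)"
  shows "k \<le> card T"
proof -
  obtain f where f: "\<And>i. i < k \<Longrightarrow> f i \<in> set (fst (P i)) \<inter> T \<and> f i \<noteq> s \<and> f i \<noteq> t"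
    using assms(2) by metis
  have "inj_on f {..<k}"
    using f assms(3) by (fastforce simp: inj_on_def paths_disjoint_def)
  moreover have "f ` {..<k} \<subseteq> T" using f by auto
  ultimately show ?thesis using card_inj_on_le[OF _ _ assms(1)] by fastforce
qed

definition disjoint_temporal_paths ::
  "'a set \<Rightarrow> 'e set \<Rightarrow> ('e \<Rightarrow> 'a set) \<Rightarrow> ('e \<Rightarrow> nat) \<Rightarrow> 'a \<Rightarrow> 'a \<Rightarrow> nat \<Rightarrow>
   (nat \<Rightarrow> 'a list \<times> 'e list) \<Rightarrow> bool" where
  "disjoint_temporal_paths V E ends lam s t k P \<longleftrightarrow>
     (\<forall>i<k. temporal_path V E ends lam {} s t (P i)) \<and>
     (\<forall>i<k. \<forall>j<k. i \<noteq> j \<longrightarrow> paths_disjoint s t (P i) (P j))"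

lemma disjoint_temporal_paths_le_card:
  assumes "finite V" "s \<noteq> t" "\<not> adjacent E ends s t" "disjoint_temporal_paths V E ends lam s t k P"
  shows "k \<le> card V"
proof (rule disjoint_paths_le_card[OF assms(1)])
  fix i assume "i < k"
  then have path: "temporal_path V E ends lam {} s t (P i)"
    using assms(4) by (simp add: disjoint_temporal_paths_def)
  then have "set (fst (P i)) \<subseteq> V" by (auto simp: temporal_path_def Let_def)
  then show "\<exists>v\<in>set (fst (P i)) \<inter> V. v \<noteq> s \<and> v \<noteq> t"
    using temporal_path_internal_vertex[OF path assms(2,3)] by blast
qed (use assms(4) in \<open>simp add: disjoint_temporal_paths_def\<close>)

lemma
  assumes "finite V" "s \<noteq> t" "\<not> adjacent E ends s t"
  shows max_disjoint_paths_attained: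
      "\<exists>P. disjoint_temporal_paths V E ends lam s t (max_disjoint_paths V E ends lam s t) P"
    and max_disjoint_paths_maximal:
      "disjoint_temporal_paths V E ends lam s t k P \<Longrightarrow> k \<le> max_disjoint_paths V E ends lam s t"
proof -
  have max_eq: "max_disjoint_paths V E ends lam s t =
      (GREATEST k. \<exists>P. disjoint_temporal_paths V E ends lam s t k P)"
    by (simp add: max_disjoint_paths_def disjoint_temporal_paths_def)
  have "\<exists>P. disjoint_temporal_paths V E ends lam s t 0 P"
    by (simp add: disjoint_temporal_paths_def)
  moreover have bound: "\<And>k. \<exists>P. disjoint_temporal_paths V E ends lam s t k P \<Longrightarrow> k \<le> card V"
    using disjoint_temporal_paths_le_card[OF assms] by blast
  ultimately show "\<exists>P. disjoint_temporal_paths V E ends lam s t (max_disjoint_paths V E ends lam s t) P"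
    unfolding max_eq by (rule GreatestI_nat)
  show "disjoint_temporal_paths V E ends lam s t k P \<Longrightarrow> k \<le> max_disjoint_paths V E ends lam s t"
    unfolding max_eq by (rule Greatest_le_nat[OF _ bound]) auto
qed

lemma
  assumes "finite V" "s \<noteq> t" "\<not> adjacent E ends s t"
  shows min_vertex_cut_attained:
      "\<exists>S. temporal_vertex_cut V E ends lam s t S \<and> card S = min_vertex_cut V E ends lam s t"
    and min_vertex_cut_minimal:
      "temporal_vertex_cut V E ends lam s t S \<Longrightarrow> min_vertex_cut V E ends lam s t \<le> card S"
proof -
  have trivial_cut: "temporal_vertex_cut V E ends lam s t (V - {s, t})"
    unfolding temporal_vertex_cut_def
  proof (intro conjI notI)
    assume "\<exists>P. temporal_path V E ends lam (V - {s, t}) s t P"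
    then obtain P where path: "temporal_path V E ends lam (V - {s, t}) s t P" by blast
    then have "set (fst P) \<subseteq> {s, t}" by (auto simp: temporal_path_def Let_def)
    then show False using temporal_path_internal_vertex[OF path assms(2,3)] by blast
  qed auto
  show "\<exists>S. temporal_vertex_cut V E ends lam s t S \<and> card S = min_vertex_cut V E ends lam s t"
    unfolding min_vertex_cut_def by (rule LeastI_ex) (use trivial_cut in blast)
  show "temporal_vertex_cut V E ends lam s t S \<Longrightarrow> min_vertex_cut V E ends lam s t \<le> card S"
    unfolding min_vertex_cut_def by (rule Least_le) blast
qed

text \<open>Every path of a disjoint family must meet a minimum cut in an internal vertex.\<close>
lemma max_disjoint_paths_le_min_vertex_cut:
  assumes "finite V" "s \<noteq> t" "\<not> adjacent E ends s t"
  shows "max_disjoint_paths V E ends lam s t \<le> min_vertex_cut V E ends lam s t"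
proof -
  obtain P where P: "disjoint_temporal_paths V E ends lam s t (max_disjoint_paths V E ends lam s t) P"
    using max_disjoint_paths_attained[OF assms] by blast
  obtain S where S: "temporal_vertex_cut V E ends lam s t S" "card S = min_vertex_cut V E ends lam s t"
    using min_vertex_cut_attained[OF assms] by blast
  have "finite S" using S(1) assms(1) by (auto simp: temporal_vertex_cut_def intro: finite_subset)
  then have "max_disjoint_paths V E ends lam s t \<le> card S"
  proof (rule disjoint_paths_le_card)
    fix i assume "i < max_disjoint_paths V E ends lam s t"
    then have "temporal_path V E ends lam {} s t (P i)"
      using P by (simp add: disjoint_temporal_paths_def)
    moreover have "\<not> temporal_path V E ends lam S s t (P i)"
      using S(1) unfolding temporal_vertex_cut_def by blast
    ultimately have "set (fst (P i)) \<inter> S \<noteq> {}" by (auto simp: temporal_path_def Let_def)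
    then show "\<exists>v\<in>set (fst (P i)) \<inter> S. v \<noteq> s \<and> v \<noteq> t"
      using S(1) by (auto simp: temporal_vertex_cut_def)
  qed (use P in \<open>simp add: disjoint_temporal_paths_def\<close>)
  then show ?thesis using S(2) by simp
qed

locale m_subdivided =
  fixes V :: "'a set" and E :: "'e set" and ends :: "'e \<Rightarrow> 'a set" and lam :: "'e \<Rightarrow> nat"
    and x y z :: 'a and E1 E2 :: "'e set" and f1 f2 :: "'e \<Rightarrow> 'e"
    and E' :: "'e set" and ends' :: "'e \<Rightarrow> 'a set"
  assumes multigraph: "multigraph V E ends"
    and x_in_V: "x \<in> V" and y_in_V: "y \<in> V" and x_neq_y: "x \<noteq> y" and z_notin_V: "z \<notin> V"
    and E1_disjoint: "E1 \<inter> E = {}" and E2_disjoint: "E2 \<inter> E = {}" and E1_E2_disjoint: "E1 \<inter> E2 = {}"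
    and E'_eq: "E' = (E - edges_between E ends x y) \<union> E1 \<union> E2"
    and ends'_old: "\<And>e. e \<in> E - edges_between E ends x y \<Longrightarrow> ends' e = ends e"
    and ends'_E1: "\<And>e. e \<in> E1 \<Longrightarrow> ends' e = {x, z}"
    and ends'_E2: "\<And>e. e \<in> E2 \<Longrightarrow> ends' e = {z, y}"
    and bij_f1: "bij_betw f1 E1 (edges_between E ends x y)"
    and bij_f2: "bij_betw f2 E2 (edges_between E ends x y)"
begin

abbreviation "Exy \<equiv> edges_between E ends x y"

definition parent :: "'e \<Rightarrow> 'e" where
  "parent e = (if e \<in> E1 then f1 e else if e \<in> E2 then f2 e else e)"

definition lam' :: "'e \<Rightarrow> nat" where
  "lam' e = lam (parent e)"

lemma x_neq_z: "x \<noteq> z" and y_neq_z: "y \<noteq> z"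
  using x_in_V y_in_V z_notin_V by auto

lemma Exy_iff: "e \<in> Exy \<longleftrightarrow> e \<in> E \<and> ends e = {x, y}"
  by (simp add: edges_between_def)

lemma parent_old [simp]: "e \<in> E \<Longrightarrow> parent e = e"
  using E1_disjoint E2_disjoint by (auto simp: parent_def)

lemma lam'_old: "e \<in> E \<Longrightarrow> lam' e = lam e"
  by (simp add: lam'_def)

lemma parent_new: "e \<in> E1 \<union> E2 \<Longrightarrow> parent e \<in> Exy"
  using bij_f1 bij_f2 by (auto simp: parent_def bij_betw_def)

lemma parent_in_E: "e \<in> E' \<Longrightarrow> parent e \<in> E"
  using parent_new by (auto simp: E'_eq Exy_iff)

lemma parent_avoiding_z:
  assumes "e \<in> E'" "ends' e = {a, b}" "a \<noteq> z" "b \<noteq> z"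
  shows "parent e = e \<and> e \<in> E - Exy \<and> ends e = {a, b}"
proof -
  have "e \<notin> E1 \<union> E2" using assms ends'_E1 ends'_E2 by (metis Un_iff insertCI insertE singletonD)
  then show ?thesis using assms E'_eq ends'_old by auto
qed

lemma edge_at_z:
  assumes "e \<in> E'" "ends' e = {a, z}"
  shows "e \<in> E1 \<union> E2 \<and> (a = x \<or> a = y)"
proof -
  have "e \<notin> E - Exy"
  proof
    assume "e \<in> E - Exy"
    then have "z \<in> V" using assms ends'_old multigraph by (auto simp: multigraph_def)
    then show False using z_notin_V by simp
  qed
  then have "e \<in> E1 \<union> E2" using assms(1) E'_eq by auto
  then show ?thesis using assms(2) ends'_E1 ends'_E2 x_neq_z y_neq_z by (auto simp: doubleton_eq_iff)
qed

lemma path_avoiding_z_in_original: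
  assumes path: "temporal_path (insert z V) E' ends' lam' S s t (vs, es)" and "z \<notin> set vs"
  shows "temporal_path V E ends lam S s t (vs, es)"
proof -
  have len: "length es + 1 = length vs"
    and edges: "\<And>i. i < length es \<Longrightarrow> es ! i \<in> E' \<and> ends' (es ! i) = {vs ! i, vs ! Suc i}"
    using path by (auto simp: temporal_path_Pair)
  have old: "es ! i \<in> E \<and> ends (es ! i) = {vs ! i, vs ! Suc i}" if "i < length es" for i
  proof -
    have "vs ! i \<noteq> z" "vs ! Suc i \<noteq> z"
      using nth_mem[of i vs] nth_mem[of "Suc i" vs] that len \<open>z \<notin> set vs\<close> by auto
    then show ?thesis using parent_avoiding_z edges[OF that] by blast
  qed
  then have "map lam es = map lam' es"
    by (auto simp: lam'_old in_set_conv_nth)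
  then have "sorted (map lam es)" using path unfolding temporal_path_Pair by metis
  then show ?thesis using path old \<open>z \<notin> set vs\<close> by (auto simp: temporal_path_Pair)
qed

lemma z_neighbours_on_path:
  assumes path: "temporal_path (insert z V) E' ends' lam' S s t (vs, es)"
    and "s \<in> V" "t \<in> V" "k < length vs" "vs ! k = z"
  shows "0 < k" "k < length es"
    and "parent (es ! (k - 1)) \<in> E \<and> ends (parent (es ! (k - 1))) = {vs ! (k - 1), vs ! Suc k}"
proof -
  have A: "vs \<noteq> []" "hd vs = s" "last vs = t" "distinct vs" "length es + 1 = length vs"
    "\<And>i. i < length es \<Longrightarrow> es ! i \<in> E' \<and> ends' (es ! i) = {vs ! i, vs ! Suc i}"
    using path by (auto simp: temporal_path_Pair)
  show "0 < k" using A(1,2) assms z_notin_V by (cases k) (auto simp: hd_conv_nth)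
  moreover show "k < length es"
  proof -
    have "length vs - 1 = length es" using A(5) by simp
    then have "vs ! length es = t" using A(1,3) last_conv_nth by metis
    then show ?thesis using A(5) assms z_notin_V by (cases "k = length es") auto
  qed
  ultimately have "es ! (k - 1) \<in> E'" "ends' (es ! (k - 1)) = {vs ! (k - 1), z}"
    and "es ! k \<in> E'" "ends' (es ! k) = {vs ! Suc k, z}"
    using A(6)[of "k - 1"] A(6)[of k] \<open>vs ! k = z\<close> by (auto simp: insert_commute)
  then have before: "es ! (k - 1) \<in> E1 \<union> E2 \<and> (vs ! (k - 1) = x \<or> vs ! (k - 1) = y)"
    and after: "vs ! Suc k = x \<or> vs ! Suc k = y"
    using edge_at_z by blast+
  have "vs ! (k - 1) \<noteq> vs ! Suc k"
    using nth_eq_iff_index_eq[OF A(4)] A(5) \<open>k < length es\<close> by fastforce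
  then have "{vs ! (k - 1), vs ! Suc k} = {x, y}" using before after by auto
  then show "parent (es ! (k - 1)) \<in> E \<and> ends (parent (es ! (k - 1))) = {vs ! (k - 1), vs ! Suc k}"
    using parent_new before Exy_iff by simp
qed

text \<open>A path through z enters and leaves it via x and y, so z can be bypassed by the
  xy-edge whose label is the one of the edge entering z.\<close>
lemma path_through_z_shortcut:
  assumes path: "temporal_path (insert z V) E' ends' lam' S s t (vs, es)"
    and "s \<in> V" "t \<in> V" "k < length vs" "vs ! k = z"
  shows "temporal_path V E ends lam S s t
           (take k vs @ drop (Suc k) vs, map parent (take k es @ drop (Suc k) es))"
    (is "temporal_path _ _ _ _ _ _ _ (?vs, map parent ?es)")
proof -
  have A: "vs \<noteq> []" "hd vs = s" "last vs = t" "distinct vs" "set vs \<subseteq> insert z V - S"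
    "length es + 1 = length vs"
    "\<And>i. i < length es \<Longrightarrow> es ! i \<in> E' \<and> ends' (es ! i) = {vs ! i, vs ! Suc i}"
    "sorted (map lam' es)"
    using path by (auto simp: temporal_path_Pair)
  note k = z_neighbours_on_path[OF assms]
  have vs_set: "distinct ?vs" "set ?vs = set vs - {z}"
    using distinct_take_drop_Suc[OF A(4) assms(4)] assms(5) by simp_all
  have len: "length ?es = length es - 1" "length ?vs = length es"
    using k(2) A(6) by auto
  have other: "parent (es ! i) \<in> E \<and> ends (parent (es ! i)) = {vs ! i, vs ! Suc i}"
    if "i < length es" "i \<noteq> k - 1" "i \<noteq> k" for i
  proof -
    have "vs ! i \<noteq> z" "vs ! Suc i \<noteq> z"
      using nth_eq_iff_index_eq[OF A(4)] assms(4,5) A(6) that k(1) by auto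
    then show ?thesis using parent_avoiding_z[of "es ! i"] A(7)[OF that(1)] by simp
  qed
  have "map lam (map parent ?es) = take k (map lam' es) @ drop (Suc k) (map lam' es)"
    by (simp add: lam'_def take_map drop_map)
  then have "sorted (map lam (map parent ?es))" using sorted_take_drop_Suc[OF A(8)] by simp
  moreover have "\<forall>i < length (map parent ?es).
      map parent ?es ! i \<in> E \<and> ends (map parent ?es ! i) = {?vs ! i, ?vs ! Suc i}"
    using walk_bypass_vertex[OF A(6) k(1,2) other k(3)] len by (simp del: map_append)
  moreover have "hd ?vs = s" "last ?vs = t"
    using A(1-3,6) k(1,2) by (auto simp: hd_append last_append)
  moreover have "?vs \<noteq> []" "set ?vs \<subseteq> V - S" "length (map parent ?es) + 1 = length ?vs"
    using vs_set(2) A(5) len k(2) by auto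
  ultimately show ?thesis using vs_set(1) unfolding temporal_path_Pair by blast
qed

lemma path_contract:
  assumes path: "temporal_path (insert z V) E' ends' lam' S s t P" and "s \<in> V" "t \<in> V"
  obtains Q where "temporal_path V E ends lam S s t Q" "set (fst Q) \<subseteq> set (fst P)"
proof -
  obtain vs es where P: "P = (vs, es)" by (cases P)
  show thesis
  proof (cases "z \<in> set vs")
    case False
    then show thesis using that path_avoiding_z_in_original[OF path[unfolded P]] P by simp
  next
    case True
    then obtain k where "k < length vs" "vs ! k = z" by (metis in_set_conv_nth)
    note shortcut = path_through_z_shortcut[OF path[unfolded P] assms(2,3) this]
    have "set (take k vs @ drop (Suc k) vs) \<subseteq> set vs"
      using set_take_subset set_drop_subset by fastforce
    then show thesis using that shortcut P by auto
  qed
qed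

lemma path_avoiding_xy_in_subdivision:
  assumes path: "temporal_path V E ends lam S s t (vs, es)" and "set es \<inter> Exy = {}"
  shows "temporal_path (insert z V) E' ends' lam' S s t (vs, es)"
proof -
  have edges: "\<And>i. i < length es \<Longrightarrow> es ! i \<in> E \<and> ends (es ! i) = {vs ! i, vs ! Suc i}"
    using path by (auto simp: temporal_path_Pair)
  then have "map lam es = map lam' es"
    by (auto simp: lam'_old in_set_conv_nth)
  then have "sorted (map lam' es)" using path unfolding temporal_path_Pair by metis
  moreover have "es ! i \<in> E' \<and> ends' (es ! i) = {vs ! i, vs ! Suc i}" if "i < length es" for i
    using edges[OF that] nth_mem[OF that] assms(2) E'_eq ends'_old by auto
  ultimately show ?thesis using path by (auto simp: temporal_path_Pair)
qed

lemma split_xy_edge: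
  assumes "e \<in> Exy" "{a, b} = {x, y}"
  obtains h1 h2 where "h1 \<in> E'" "h2 \<in> E'" "ends' h1 = {a, z}" "ends' h2 = {z, b}"
    "lam' h1 = lam e" "lam' h2 = lam e"
proof -
  define h1 where "h1 = inv_into E1 f1 e"
  define h2 where "h2 = inv_into E2 f2 e"
  have h1: "h1 \<in> E1" "f1 h1 = e" and h2: "h2 \<in> E2" "f2 h2 = e"
    using bij_f1 bij_f2 assms(1) by (auto simp: h1_def h2_def bij_betw_def inv_into_into f_inv_into_f)
  then have "h1 \<in> E'" "h2 \<in> E'" "lam' h1 = lam e" "lam' h2 = lam e"
    using E1_E2_disjoint by (auto simp: E'_eq lam'_def parent_def)
  moreover have "ends' h1 = {x, z}" "ends' h2 = {z, y}" using h1 h2 ends'_E1 ends'_E2 by auto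
  ultimately show thesis
    using that[of h1 h2] that[of h2 h1] assms(2) x_neq_y by (auto simp: doubleton_eq_iff insert_commute)
qed

lemma path_subdivide_edge:
  assumes path: "temporal_path V E ends lam S s t (vs, es)" and "z \<notin> S"
    and j: "j < length es" "\<And>i. i < length es \<Longrightarrow> i \<noteq> j \<Longrightarrow> es ! i \<notin> Exy"
    and h: "h1 \<in> E'" "h2 \<in> E'" "ends' h1 = {vs ! j, z}" "ends' h2 = {z, vs ! Suc j}"
      "lam' h1 = lam (es ! j)" "lam' h2 = lam (es ! j)"
  shows "temporal_path (insert z V) E' ends' lam' S s t
           (take (Suc j) vs @ z # drop (Suc j) vs, take j es @ h1 # h2 # drop (Suc j) es)"
    (is "temporal_path _ _ _ _ _ _ _ (?vs, ?es)")
proof -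
  have A: "vs \<noteq> []" "hd vs = s" "last vs = t" "distinct vs" "set vs \<subseteq> V - S"
    "length es + 1 = length vs"
    "\<And>i. i < length es \<Longrightarrow> es ! i \<in> E \<and> ends (es ! i) = {vs ! i, vs ! Suc i}"
    "sorted (map lam es)"
    using path by (auto simp: temporal_path_Pair)
  have len: "length ?vs = length vs + 1" "length ?es = length es + 1"
    using A(6) j(1) by auto
  have old: "es ! i \<in> E' \<and> ends' (es ! i) = {vs ! i, vs ! Suc i}"
    if "i < length es" "i \<noteq> j" for i
    using A(7)[of i] j(2)[of i] that E'_eq ends'_old by auto
  have "map lam' ?es = take j (map lam es) @ lam (es ! j) # lam (es ! j) # drop (Suc j) (map lam es)"
    using h(5,6) A(7) by (auto simp: take_map drop_map lam'_old in_set_conv_nth)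
  then have "sorted (map lam' ?es)" using sorted_duplicate_nth[OF A(8)] j(1) by simp
  moreover have "distinct ?vs \<and> set ?vs = insert z (set vs)"
    using distinct_take_Cons_drop[OF A(4)] A(5) z_notin_V by blast
  moreover have "hd ?vs = s" "last ?vs = t"
    using A(1-3,6) j(1) by (auto simp: hd_append last_append)
  moreover have "\<forall>i < length ?es. ?es ! i \<in> E' \<and> ends' (?es ! i) = {?vs ! i, ?vs ! Suc i}"
    using walk_split_edge[OF A(6) j(1) old h(1-4)] len(2) by (simp only:) blast
  moreover have "?vs \<noteq> []" "length ?es + 1 = length ?vs"
    unfolding len A(6)[symmetric] by simp_all
  ultimately show ?thesis
    using A(5) \<open>z \<notin> S\<close> unfolding temporal_path_Pair by auto
qed

lemma path_expand:
  assumes path: "temporal_path V E ends lam S s t P" and "z \<notin> S"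
  shows "\<exists>Q. temporal_path (insert z V) E' ends' lam' S s t Q"
proof -
  obtain vs es where P: "P = (vs, es)" by (cases P)
  show ?thesis
  proof (cases "set es \<inter> Exy = {}")
    case True
    then show ?thesis using path_avoiding_xy_in_subdivision path P by blast
  next
    case False
    then obtain j where j: "j < length es" "es ! j \<in> Exy" by (auto simp: in_set_conv_nth)
    have A: "distinct vs" "length es + 1 = length vs"
      "\<And>i. i < length es \<Longrightarrow> es ! i \<in> E \<and> ends (es ! i) = {vs ! i, vs ! Suc i}"
      using path by (auto simp: P temporal_path_Pair)
    have ends_j: "{vs ! j, vs ! Suc j} = {x, y}" using A(3)[OF j(1)] j(2) Exy_iff by simp
    have unique: "es ! i \<notin> Exy" if "i < length es" "i \<noteq> j" for i
      using distinct_consecutive_pairs_eq[OF A(1), of i j] A(2,3) that j ends_j Exy_iff by auto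
    obtain h1 h2 where "h1 \<in> E'" "h2 \<in> E'" "ends' h1 = {vs ! j, z}" "ends' h2 = {z, vs ! Suc j}"
      "lam' h1 = lam (es ! j)" "lam' h2 = lam (es ! j)"
      using split_xy_edge[OF j(2) ends_j] by blast
    then show ?thesis
      using path_subdivide_edge[OF path[unfolded P] assms(2) j(1) unique] by blast
  qed
qed

lemma cut_avoiding_z:
  assumes cut: "temporal_vertex_cut (insert z V) E' ends' lam' s t S" and "z \<notin> S"
  shows "temporal_vertex_cut V E ends lam s t S"
  using assms path_expand unfolding temporal_vertex_cut_def by blast

text \<open>A cut containing z is replaced by one containing an endpoint w of xy other than s, t:
  a path avoiding w uses no xy-edge and hence survives in the subdivision.\<close>
lemma cut_containing_z:
  assumes "s \<in> V" "t \<in> V" "\<not> adjacent E ends s t" "Exy \<noteq> {}"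
    and cut: "temporal_vertex_cut (insert z V) E' ends' lam' s t S" and "z \<in> S"
  obtains S' where "temporal_vertex_cut V E ends lam s t S'" "card S' \<le> card S"
proof -
  have "{x, y} \<noteq> {s, t}" using assms(3,4) by (auto simp: adjacent_def edges_between_def)
  then obtain w where w: "w \<in> {x, y}" "w \<noteq> s" "w \<noteq> t" using x_neq_y by blast
  define S' where "S' = insert w (S - {z})"
  have "finite S"
    using cut multigraph by (auto simp: temporal_vertex_cut_def multigraph_def intro: finite_subset)
  then have "card S' \<le> Suc (card (S - {z}))" by (simp add: S'_def card_insert_if)
  also have "\<dots> = card S" using \<open>finite S\<close> \<open>z \<in> S\<close> by (rule card_Suc_Diff1)
  finally have "card S' \<le> card S" .
  moreover have "temporal_vertex_cut V E ends lam s t S'"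
    unfolding temporal_vertex_cut_def
  proof (intro conjI notI)
    show "S' \<subseteq> V - {s, t}" using cut w x_in_V y_in_V by (auto simp: S'_def temporal_vertex_cut_def)
    assume "\<exists>P. temporal_path V E ends lam S' s t P"
    then obtain vs es where path: "temporal_path V E ends lam S' s t (vs, es)" by (metis prod.collapse)
    then have A: "set vs \<subseteq> V - S'" "length es + 1 = length vs"
      "\<And>i. i < length es \<Longrightarrow> es ! i \<in> E \<and> ends (es ! i) = {vs ! i, vs ! Suc i}"
      by (auto simp: temporal_path_Pair)
    have "set es \<inter> Exy = {}"
    proof (rule ccontr)
      assume "set es \<inter> Exy \<noteq> {}"
      then obtain i where "i < length es" "{vs ! i, vs ! Suc i} = {x, y}"
        using A(3) Exy_iff by (auto simp: in_set_conv_nth)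
      then have "w \<in> set vs" using w(1) A(2) by (auto simp: doubleton_eq_iff)
      then show False using A(1) by (auto simp: S'_def)
    qed
    moreover have "temporal_path V E ends lam S s t (vs, es)"
      using path z_notin_V by (auto simp: temporal_path_Pair S'_def)
    ultimately show False
      using path_avoiding_xy_in_subdivision cut unfolding temporal_vertex_cut_def by blast
  qed
  ultimately show thesis using that by blast
qed

lemma lam'_pos: "\<forall>e\<in>E. 0 < lam e \<Longrightarrow> \<forall>e\<in>E'. 0 < lam' e"
  using parent_in_E by (simp add: lam'_def)

lemma not_adjacent_subdivision:
  assumes "s \<in> V" "t \<in> V" "\<not> adjacent E ends s t"
  shows "\<not> adjacent E' ends' s t"
proof
  assume "adjacent E' ends' s t"
  then obtain e where "e \<in> E'" "ends' e = {s, t}" by (auto simp: adjacent_def)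
  moreover have "s \<noteq> z" "t \<noteq> z" using assms(1,2) z_notin_V by auto
  ultimately have "e \<in> E" "ends e = {s, t}" using parent_avoiding_z by blast+
  then show False using assms(3) by (auto simp: adjacent_def)
qed

lemma max_disjoint_paths_subdivision_le:
  assumes "s \<in> V" "t \<in> V" "s \<noteq> t" "\<not> adjacent E ends s t"
  shows "max_disjoint_paths (insert z V) E' ends' lam' s t \<le> max_disjoint_paths V E ends lam s t"
proof -
  have fin: "finite V" using multigraph by (simp add: multigraph_def)
  let ?p' = "max_disjoint_paths (insert z V) E' ends' lam' s t"
  obtain P where P: "disjoint_temporal_paths (insert z V) E' ends' lam' s t ?p' P"
    using max_disjoint_paths_attained[OF _ assms(3) not_adjacent_subdivision[OF assms(1,2,4)]] fin
    by blast
  have "\<forall>i. \<exists>Q. i < ?p' \<longrightarrow> temporal_path V E ends lam {} s t Q \<and> set (fst Q) \<subseteq> set (fst (P i))"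
    using P path_contract[OF _ assms(1,2)] by (metis disjoint_temporal_paths_def)
  then obtain Q where Q: "\<And>i. i < ?p' \<Longrightarrow>
      temporal_path V E ends lam {} s t (Q i) \<and> set (fst (Q i)) \<subseteq> set (fst (P i))"
    by metis
  have "disjoint_temporal_paths V E ends lam s t ?p' Q"
    unfolding disjoint_temporal_paths_def paths_disjoint_def
  proof (intro conjI allI impI)
    fix i j assume "i < ?p'" "j < ?p'" "i \<noteq> j"
    then have "set (fst (P i)) \<inter> set (fst (P j)) \<subseteq> {s, t}"
      using P by (simp add: disjoint_temporal_paths_def paths_disjoint_def)
    moreover have "set (fst (Q i)) \<subseteq> set (fst (P i))" "set (fst (Q j)) \<subseteq> set (fst (P j))"
      using Q \<open>i < ?p'\<close> \<open>j < ?p'\<close> by simp_all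
    ultimately show "set (fst (Q i)) \<inter> set (fst (Q j)) \<subseteq> {s, t}" by blast
  qed (use Q in simp)
  then show ?thesis using max_disjoint_paths_maximal[OF fin assms(3,4)] by blast
qed

lemma min_vertex_cut_le_subdivision:
  assumes "s \<in> V" "t \<in> V" "s \<noteq> t" "\<not> adjacent E ends s t" "Exy \<noteq> {}"
  shows "min_vertex_cut V E ends lam s t \<le> min_vertex_cut (insert z V) E' ends' lam' s t"
proof -
  have fin: "finite V" using multigraph by (simp add: multigraph_def)
  obtain S where S: "temporal_vertex_cut (insert z V) E' ends' lam' s t S"
    "card S = min_vertex_cut (insert z V) E' ends' lam' s t"
    using min_vertex_cut_attained[OF _ assms(3) not_adjacent_subdivision[OF assms(1,2,4)]] fin
    by blast
  obtain S' where S': "temporal_vertex_cut V E ends lam s t S'" "card S' \<le> card S"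
    using cut_avoiding_z cut_containing_z[OF assms(1,2,4,5)] S(1) by (metis order_refl)
  then show ?thesis using min_vertex_cut_minimal[OF fin assms(3,4) S'(1)] S(2) by linarith
qed

lemma subdivision_keeps_gap:
  assumes "s \<in> V" "t \<in> V" "s \<noteq> t" "\<not> adjacent E ends s t" "Exy \<noteq> {}"
    and "max_disjoint_paths V E ends lam s t \<noteq> min_vertex_cut V E ends lam s t"
  shows "max_disjoint_paths (insert z V) E' ends' lam' s t \<noteq> min_vertex_cut (insert z V) E' ends' lam' s t"
proof -
  have "finite V" using multigraph by (simp add: multigraph_def)
  then have "max_disjoint_paths V E ends lam s t \<le> min_vertex_cut V E ends lam s t"
    by (rule max_disjoint_paths_le_min_vertex_cut[OF _ assms(3,4)])
  then show ?thesis
    using assms(6) max_disjoint_paths_subdivision_le[OF assms(1-4)]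
      min_vertex_cut_le_subdivision[OF assms(1-5)] by linarith
qed

end

lemma m_subdivision_obtains_m_subdivided:
  assumes "multigraph V E ends" "x \<in> V" "y \<in> V" "x \<noteq> y"
    and "m_subdivision V E ends x y z V' E' ends'"
  obtains E1 E2 f1 f2 where "V' = insert z V" "m_subdivided V E ends x y z E1 E2 f1 f2 E' ends'"
proof -
  let ?Exy = "edges_between E ends x y"
  obtain E1 E2 where z: "z \<notin> V" "V' = insert z V" and
    E12: "finite E1" "finite E2" "card E1 = card ?Exy" "card E2 = card ?Exy"
      "E1 \<inter> E2 = {}" "E1 \<inter> E = {}" "E2 \<inter> E = {}" "E' = (E - ?Exy) \<union> E1 \<union> E2"
      "\<forall>e\<in>E - ?Exy. ends' e = ends e" "\<forall>e\<in>E1. ends' e = {x, z}" "\<forall>e\<in>E2. ends' e = {z, y}"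
    using assms(5) unfolding m_subdivision_def Let_def by blast
  have "finite ?Exy" using assms(1) by (simp add: multigraph_def edges_between_def)
  then obtain f1 f2 where "bij_betw f1 E1 ?Exy" "bij_betw f2 E2 ?Exy"
    using finite_same_card_bij E12(1-4) by metis
  then have "m_subdivided V E ends x y z E1 E2 f1 f2 E' ends'"
    using assms(1-4) z E12 by unfold_locales auto
  then show thesis using that z(2) by blast
qed

theorem lemma2:
  fixes V V' :: "'a set" and E E' :: "'e set"
    and ends ends' :: "'e \<Rightarrow> 'a set" and x y z :: 'a
  assumes "multigraph V E ends"
    and "\<not> mengerian V E ends"
    and "x \<in> V" and "y \<in> V" and "x \<noteq> y"
    and "edges_between E ends x y \<noteq> {}"
    and "m_subdivision V E ends x y z V' E' ends'"
  shows "\<not> mengerian V' E' ends'"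
proof -
  obtain lam s t where lam: "\<forall>e\<in>E. 0 < lam e" and st: "s \<in> V" "t \<in> V" "s \<noteq> t"
    and nadj: "\<not> adjacent E ends s t"
    and gap: "max_disjoint_paths V E ends lam s t \<noteq> min_vertex_cut V E ends lam s t"
    using assms(2) unfolding mengerian_def by blast
  obtain E1 E2 f1 f2 where V': "V' = insert z V"
    and sub: "m_subdivided V E ends x y z E1 E2 f1 f2 E' ends'"
    using m_subdivision_obtains_m_subdivided[OF assms(1,3-5,7)] .
  interpret m_subdivided V E ends lam x y z E1 E2 f1 f2 E' ends'
    by (rule sub)
  have "s \<in> V'" "t \<in> V'" "\<not> adjacent E' ends' s t"
    using st nadj not_adjacent_subdivision V' by auto
  moreover have "max_disjoint_paths V' E' ends' lam' s t \<noteq> min_vertex_cut V' E' ends' lam' s t"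
    using subdivision_keeps_gap[OF st nadj assms(6) gap] V' by simp
  ultimately show ?thesis
    using lam'_pos[OF lam] st(3) unfolding mengerian_def by blast
qed

end
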